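(* Let $1\le k\le n-1$ and let $\Sigma=\mathbb{S}^k\times\mathbb{R}^{n-k}\subset\mathbb{R}^{n+1}$ be a self-shrinker. Let $C\subset\mathbb{S}^k$ be an open hemisphere (the intersection of $\mathbb{S}^k$ with an open half-space of $\mathbb{R}^{k+1}$ bounded by a hyperplane through the origin), and let $H\subset\mathbb{R}^{n-k}$ be an open half-space whose boundary is an $(n-k-1)$-dimensional linear subspace. Then $C\times H\subset\Sigma$ is stable.
   Context: $\mathbb{S}^k$ is the round sphere of radius $\sqrt{2k}$ centered at the origin of $\mathbb{R}^{k+1}$. Stability operator: $Lf=\Delta f-\tfrac12\langle\vec x,\nabla f\rangle+(|A|^2+\tfrac12)f$. A region $\Omega$ is stable if there is a function $u$ with $Lu=0$ and $u>0$ on $\Omega$. *)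

theory Defs
  imports "HOL-Analysis.Analysis"
begin

text \<open>Ambient space R^{n+1} = R^{k+1} x R^{n-k}, points (y, z) with
  y :: real^'a (CARD('a) = k+1) and z :: real^'b (CARD('b) = n-k).\<close>

definition shr_k :: "'a::finite itself \<Rightarrow> nat" where
  "shr_k _ = CARD('a) - 1"

definition shr_radius :: "'a::finite itself \<Rightarrow> real" where
  "shr_radius A = sqrt (2 * real (shr_k A))"

definition Sigma :: "((real^'a::finite) \<times> (real^'b::finite)) set" where
  "Sigma = {(y, z). norm y = shr_radius TYPE('a)}"

definition dd :: "('v::real_normed_vector \<Rightarrow> real) \<Rightarrow> 'v \<Rightarrow> 'v \<Rightarrow> real" where
  "dd F p v = deriv (\<lambda>t. F (p + t *\<^sub>R v)) 0"

definition eucl_laplacian :: "('v::euclidean_space \<Rightarrow> real) \<Rightarrow> 'v \<Rightarrow> real" where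
  "eucl_laplacian F p = (\<Sum>b\<in>Basis. dd (\<lambda>q. dd F q b) p b)"

text \<open>Extension of a function on Sigma, constant along the normal lines
  (0-homogeneous in the sphere factor).  For such an extension F one has
  nabla_Sigma f = nabla F and Delta_Sigma f = Delta F on Sigma.\<close>
definition hext :: "((real^'a::finite) \<times> (real^'b::finite) \<Rightarrow> real)
    \<Rightarrow> (real^'a) \<times> (real^'b) \<Rightarrow> real" where
  "hext u = (\<lambda>(y, z). u ((shr_radius TYPE('a) / norm y) *\<^sub>R y, z))"

text \<open>Unit normal field of Sigma, extended 0-homogeneously; |A|^2 is the
  squared Hilbert-Schmidt norm of its differential (the shape operator).\<close>
definition shr_normal :: "(real^'a::finite) \<times> (real^'b::finite) \<Rightarrow> (real^'a) \<times> (real^'b)" where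
  "shr_normal = (\<lambda>(y, z). ((1 / norm y) *\<^sub>R y, 0))"

definition sqA :: "(real^'a::finite) \<times> (real^'b::finite) \<Rightarrow> real" where
  "sqA p = (\<Sum>b\<in>Basis. (norm (frechet_derivative shr_normal (at p) b))\<^sup>2)"

definition stab_op :: "((real^'a::finite) \<times> (real^'b::finite) \<Rightarrow> real)
    \<Rightarrow> (real^'a) \<times> (real^'b) \<Rightarrow> real" where
  "stab_op u p = eucl_laplacian (hext u) p - 1/2 * dd (hext u) p p
                 + (sqA p + 1/2) * u p"

definition twice_diff_on :: "'v set \<Rightarrow> ('v::euclidean_space \<Rightarrow> real) \<Rightarrow> bool" where
  "twice_diff_on N F \<longleftrightarrow> (\<forall>p\<in>N. F differentiable (at p)) \<and>
     (\<forall>v. \<forall>p\<in>N. (\<lambda>q. frechet_derivative F (at q) v) differentiable (at p))"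

text \<open>Open neighbourhood in R^{n+1} of a region of Sigma, obtained by moving
  along normal lines.\<close>
definition normal_nbhd :: "((real^'a::finite) \<times> (real^'b::finite)) set \<Rightarrow> ((real^'a) \<times> (real^'b)) set" where
  "normal_nbhd \<Omega> = {(y, z). y \<noteq> 0 \<and> ((shr_radius TYPE('a) / norm y) *\<^sub>R y, z) \<in> \<Omega>}"

definition stable_region :: "((real^'a::finite) \<times> (real^'b::finite)) set \<Rightarrow> bool" where
  "stable_region \<Omega> \<longleftrightarrow> (\<exists>u. twice_diff_on (normal_nbhd \<Omega>) (hext u) \<and>
       (\<forall>p\<in>\<Omega>. stab_op u p = 0 \<and> u p > 0))"

end

(* The region is stabilised by the Jacobi field u(y, z) = <a, y> <b, z>, which is
   positive on C x H.  Its extension constant along normal lines is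
   r <a, y> <b, z> / |y|; its Laplacian splits into a spherical part, where
   <a, y> / |y| (a first eigenfunction of the sphere) contributes -k/|y|^2 times u,
   and a part linear in z, which is harmonic.  Homogeneity of degree one gives
   Euler's relation <x, grad u> = u, and |A|^2 = k/|y|^2.  On Sigma this yields
   L u = -k u/r^2 - u/2 + (k/r^2 + 1/2) u = 0. *)

theory Submission
  imports Defs
begin

lemma has_derivative_norm_compose [derivative_intros]:
  assumes "(f has_derivative f') (at x within S)" and "f x \<noteq> 0"
  shows "((\<lambda>x. norm (f x)) has_derivative (\<lambda>h. (f x \<bullet> f' h) / norm (f x))) (at x within S)"
proof -
  have "((\<lambda>x. norm (f x)) has_derivative (\<lambda>h. f' h \<bullet> sgn (f x))) (at x within S)"
    using has_derivative_compose[OF assms(1) has_derivative_norm[OF assms(2)]] by (simp add: o_def)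
  then show ?thesis by (simp add: sgn_div_norm inner_commute divide_inverse mult.commute)
qed

lemma dd_eq_derivative:
  assumes "(f has_derivative f') (at p)"
  shows "dd f p v = f' v"
proof -
  have "((\<lambda>t. p + t *\<^sub>R v) has_derivative (\<lambda>t. t *\<^sub>R v)) (at 0)"
    by (auto intro!: derivative_eq_intros)
  moreover have "(f has_derivative f') (at (p + 0 *\<^sub>R v))"
    using assms by simp
  ultimately have "((\<lambda>t. f (p + t *\<^sub>R v)) has_derivative (\<lambda>t. f' (t *\<^sub>R v))) (at 0)"
    by (rule has_derivative_compose)
  moreover have "(\<lambda>t. f' (t *\<^sub>R v)) = (\<lambda>t. f' v * t)"
    using has_derivative_linear[OF assms] by (auto simp: linear_scale fun_eq_iff)
  ultimately have "((\<lambda>t. f (p + t *\<^sub>R v)) has_field_derivative f' v) (at 0)"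
    by (simp add: has_field_derivative_def)
  then show ?thesis unfolding dd_def by (rule DERIV_imp_deriv)
qed

lemma dd_dd_eq_deriv_deriv: "dd (\<lambda>q. dd f q v) p v = deriv (deriv (\<lambda>t. f (p + t *\<^sub>R v))) 0"
proof -
  have "dd f (p + s *\<^sub>R v) v = deriv (\<lambda>t. f (p + t *\<^sub>R v)) s" for s
  proof -
    have "deriv (\<lambda>t. f (p + t *\<^sub>R v)) s = deriv (\<lambda>t. f (p + (s + t) *\<^sub>R v)) 0"
      by (subst deriv_shift_0) (simp add: o_def)
    then show ?thesis by (simp add: dd_def scaleR_add_left add.assoc)
  qed
  then show ?thesis by (simp add: dd_def)
qed

lemma dd_dd_eq_second_derivative:
  assumes "open U" "p \<in> U" "\<And>q. q \<in> U \<Longrightarrow> (f has_derivative f' q) (at q)"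
    and "((\<lambda>q. f' q v) has_derivative f'') (at p)"
  shows "dd (\<lambda>q. dd f q v) p w = f'' w"
proof -
  have "((\<lambda>q. dd f q v) has_derivative f'') (at p)"
    using assms(4,1,2) by (rule has_derivative_transform_within_open)
      (simp add: assms(3) dd_eq_derivative[symmetric])
  then show ?thesis by (rule dd_eq_derivative)
qed

lemma dd_self_eq_if_homogeneous:
  assumes "\<And>s. s > 0 \<Longrightarrow> f (s *\<^sub>R p) = s * f p"
  shows "dd f p p = f p"
proof -
  have "((\<lambda>t. (1 + t) * f p) has_field_derivative f p) (at 0)"
    by (auto intro!: derivative_eq_intros)
  then have "((\<lambda>t. f (p + t *\<^sub>R p)) has_field_derivative f p) (at 0)"
  proof (rule has_field_derivative_transform_within_open)
    show "(1 + t) * f p = f (p + t *\<^sub>R p)" if "t \<in> {-1<..}" for t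
      using assms[of "1 + t"] that by (simp add: scaleR_add_left)
  qed auto
  then show ?thesis unfolding dd_def by (rule DERIV_imp_deriv)
qed

lemma sum_Basis_prod:
  fixes f :: "'a::euclidean_space \<times> 'b::euclidean_space \<Rightarrow> real"
  shows "sum f Basis = (\<Sum>i\<in>Basis. f (i, 0)) + (\<Sum>j\<in>Basis. f (0, j))"
proof -
  have "inj_on (\<lambda>i. (i::'a, 0::'b)) Basis" "inj_on (\<lambda>j. (0::'a, j::'b)) Basis"
    by (auto intro!: inj_onI)
  then show ?thesis
    unfolding Basis_prod_def by (subst sum.union_disjoint) (auto simp: sum.reindex)
qed

(* dd only samples f along lines, and a line in direction (i, 0) or (0, j) moves
   one factor only, so no differentiability is needed. *)
lemma eucl_laplacian_Pair:
  "eucl_laplacian f (y, z) = eucl_laplacian (\<lambda>y. f (y, z)) y + eucl_laplacian (\<lambda>z. f (y, z)) z"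
  unfolding eucl_laplacian_def dd_dd_eq_deriv_deriv by (simp add: sum_Basis_prod)

lemma eucl_laplacian_linear:
  fixes f :: "'a::euclidean_space \<Rightarrow> real"
  assumes "linear f"
  shows "eucl_laplacian f p = 0"
proof -
  have "dd f q v = f v" for q v
    using assms by (simp add: dd_eq_derivative linear_imp_has_derivative)
  then show ?thesis
    by (simp add: eucl_laplacian_def dd_eq_derivative[OF has_derivative_const])
qed

lemma has_derivative_inner_div_norm:
  fixes a x :: "'a::euclidean_space"
  assumes "x \<noteq> 0"
  shows "((\<lambda>x. (a \<bullet> x) / norm x) has_derivative
           (\<lambda>h. (a \<bullet> h) / norm x - (a \<bullet> x) * (x \<bullet> h) / norm x ^ 3)) (at x)"
  using assms
  by (auto intro!: derivative_eq_intros simp: fun_eq_iff field_simps power3_eq_cube)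

lemma has_derivative_inner_div_norm_derivative:
  fixes a v x :: "'a::euclidean_space"
  assumes "x \<noteq> 0"
  shows "((\<lambda>x. (a \<bullet> v) / norm x - (a \<bullet> x) * (x \<bullet> v) / norm x ^ 3) has_derivative
           (\<lambda>w. - ((a \<bullet> v) * (x \<bullet> w) + (a \<bullet> w) * (x \<bullet> v) + (a \<bullet> x) * (w \<bullet> v)) / norm x ^ 3
                + 3 * (a \<bullet> x) * (x \<bullet> v) * (x \<bullet> w) / norm x ^ 5)) (at x)"
  using assms
  by (auto intro!: derivative_eq_intros simp: fun_eq_iff field_simps eval_nat_numeral inner_commute)

lemma eucl_laplacian_inner_div_norm:
  fixes a x :: "'a::euclidean_space"
  assumes "x \<noteq> 0"
  shows "eucl_laplacian (\<lambda>x. (a \<bullet> x) / norm x) x = (1 - real DIM('a)) * (a \<bullet> x) / norm x ^ 3"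
proof -
  let ?N = "norm x"
  have "dd (\<lambda>q. dd (\<lambda>x. (a \<bullet> x) / norm x) q i) x i
      = (- 2 / ?N ^ 3) * ((a \<bullet> i) * (x \<bullet> i)) - (a \<bullet> x) / ?N ^ 3
        + (3 * (a \<bullet> x) / ?N ^ 5) * ((x \<bullet> i) * (x \<bullet> i))" if "i \<in> Basis" for i
  proof -
    have "dd (\<lambda>q. dd (\<lambda>x. (a \<bullet> x) / norm x) q i) x i
        = - ((a \<bullet> i) * (x \<bullet> i) + (a \<bullet> i) * (x \<bullet> i) + (a \<bullet> x) * (i \<bullet> i)) / ?N ^ 3
          + 3 * (a \<bullet> x) * (x \<bullet> i) * (x \<bullet> i) / ?N ^ 5"
      by (rule dd_dd_eq_second_derivative[of "- {0}"])
         (use assms has_derivative_inner_div_norm has_derivative_inner_div_norm_derivative in auto)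
    then show ?thesis
      using that assms by (simp add: field_simps)
  qed
  then have "eucl_laplacian (\<lambda>x. (a \<bullet> x) / norm x) x
      = (\<Sum>i\<in>Basis. (- 2 / ?N ^ 3) * ((a \<bullet> i) * (x \<bullet> i)) - (a \<bullet> x) / ?N ^ 3
                      + (3 * (a \<bullet> x) / ?N ^ 5) * ((x \<bullet> i) * (x \<bullet> i)))"
    unfolding eucl_laplacian_def by (rule sum.cong[OF refl])
  also have "\<dots> = (- 2 / ?N ^ 3) * (a \<bullet> x) - (a \<bullet> x) / ?N ^ 3 * real DIM('a)
                  + (3 * (a \<bullet> x) / ?N ^ 5) * ?N ^ 2"
    by (simp only: sum.distrib sum_subtractf sum_constant flip: sum_distrib_left)
       (simp flip: euclidean_inner power2_norm_eq_inner)
  also have "\<dots> = (1 - real DIM('a)) * (a \<bullet> x) / ?N ^ 3"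
    using assms by (simp add: field_simps eval_nat_numeral)
  finally show ?thesis .
qed

lemma twice_diff_on_mult_linear:
  fixes G :: "'a::euclidean_space \<Rightarrow> real" and L :: "'b::euclidean_space \<Rightarrow> real"
  assumes "open V" and "fst ` N \<subseteq> V" and "bounded_linear L"
    and G': "\<And>y. y \<in> V \<Longrightarrow> (G has_derivative G' y) (at y)"
    and G'': "\<And>y w. y \<in> V \<Longrightarrow> (\<lambda>y. G' y w) differentiable (at y)"
  shows "twice_diff_on N (\<lambda>q. G (fst q) * L (snd q))"
proof -
  let ?F = "\<lambda>q. G (fst q) * L (snd q)"
  let ?F' = "\<lambda>q h. G (fst q) * L (snd h) + G' (fst q) (fst h) * L (snd q)"
  have G_fst: "((\<lambda>q. G (fst q)) has_derivative (\<lambda>h. G' (fst q) (fst h))) (at q)" if "fst q \<in> V" for q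
    using has_derivative_compose[OF has_derivative_fst[OF has_derivative_ident] G'[OF that]] by simp
  have L_snd: "((\<lambda>q. L (snd q)) has_derivative (\<lambda>h. L (snd h))) (at q)" for q :: "'a \<times> 'b"
    by (rule bounded_linear_imp_has_derivative[OF bounded_linear_compose[OF assms(3) bounded_linear_snd]])
  have F': "(?F has_derivative ?F' q) (at q)" if "fst q \<in> V" for q
    using has_derivative_mult[OF G_fst[OF that] L_snd] by simp
  have F'_differentiable: "(\<lambda>q. ?F' q v) differentiable (at p)" if "fst p \<in> V" for p v
  proof -
    have "(\<lambda>q. G' (fst q) (fst v)) differentiable (at p)"
      by (rule differentiable_compose[where g=fst, OF G''[OF that]])
         (simp add: bounded_linear_imp_differentiable bounded_linear_fst)
    then show ?thesis
      using differentiableI[OF G_fst[OF that]] differentiableI[OF L_snd] by auto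
  qed
  show ?thesis
    unfolding twice_diff_on_def
  proof safe
    fix p assume "p \<in> N"
    then show "?F differentiable (at p)"
      using assms(2) F' by (blast intro: differentiableI)
  next
    fix v p assume "p \<in> N"
    then have p: "fst p \<in> V" using assms(2) by blast
    obtain D where "((\<lambda>q. ?F' q v) has_derivative D) (at p)"
      using F'_differentiable[OF p] unfolding differentiable_def by blast
    then have "((\<lambda>q. frechet_derivative ?F (at q) v) has_derivative D) (at p)"
      by (rule has_derivative_transform_within_open[OF _ open_vimage_fst[OF assms(1)]])
         (use p in \<open>auto simp: frechet_derivative_at[OF F', symmetric]\<close>)
    then show "(\<lambda>q. frechet_derivative ?F (at q) v) differentiable (at p)"
      by (rule differentiableI)
  qed
qed

lemma hext_eq_on_Sigma:
  assumes "p \<in> Sigma"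
  shows "hext u p = u p"
  using assms by (cases "shr_radius TYPE('a) = 0") (auto simp: hext_def Sigma_def)

lemma hext_scaleR:
  fixes u :: "(real^'a::finite) \<times> (real^'b::finite) \<Rightarrow> real"
  assumes "\<And>y z. u (y, s *\<^sub>R z) = s * u (y, z)" and "s > 0"
  shows "hext u (s *\<^sub>R p) = s * hext u p"
proof -
  obtain y z where p: "p = (y, z)" by fastforce
  let ?r = "shr_radius TYPE('a)"
  have "hext u (s *\<^sub>R p) = u ((?r / norm (s *\<^sub>R y)) *\<^sub>R (s *\<^sub>R y), s *\<^sub>R z)"
    by (simp add: hext_def p)
  also have "(?r / norm (s *\<^sub>R y)) *\<^sub>R (s *\<^sub>R y) = (?r / norm y) *\<^sub>R y"
    using assms(2) by (cases "y = 0") auto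
  finally show ?thesis
    by (simp add: hext_def p assms(1))
qed

lemma has_derivative_shr_normal:
  fixes p :: "(real^'a::finite) \<times> (real^'b::finite)"
  assumes "fst p \<noteq> 0"
  shows "(shr_normal has_derivative (\<lambda>h. ((1 / norm (fst p)) *\<^sub>R fst h
      - ((fst p \<bullet> fst h) / norm (fst p) ^ 3) *\<^sub>R fst p, 0::real^'b))) (at p)"
proof -
  have normal: "shr_normal = (\<lambda>q::(real^'a) \<times> (real^'b). ((1 / norm (fst q)) *\<^sub>R fst q, 0::real^'b))"
    by (auto simp: shr_normal_def fun_eq_iff)
  show ?thesis
    unfolding normal using assms
    by (auto intro!: derivative_eq_intros simp: fun_eq_iff field_simps eval_nat_numeral)
qed

lemma sqA_eq:
  fixes p :: "(real^'a::finite) \<times> (real^'b::finite)"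
  assumes "fst p \<noteq> 0"
  shows "sqA p = (real CARD('a) - 1) / norm (fst p) ^ 2"
proof -
  let ?y = "fst p" and ?N = "norm (fst p)"
  have "(norm ((1 / ?N) *\<^sub>R i - ((?y \<bullet> i) / ?N ^ 3) *\<^sub>R ?y))\<^sup>2
      = (1 / ?N ^ 2) * (i \<bullet> i) - (1 / ?N ^ 4) * ((?y \<bullet> i) * (?y \<bullet> i))" for i
  proof -
    have "?y \<bullet> ?y = ?N * ?N"
      by (simp add: power2_eq_square flip: power2_norm_eq_inner)
    then show ?thesis
      unfolding power2_norm_eq_inner inner_diff_left inner_diff_right inner_scaleR_left inner_scaleR_right
      using assms by (simp add: field_simps inner_commute eval_nat_numeral)
  qed
  then have "sqA p = (\<Sum>i\<in>Basis. (1 / ?N ^ 2) * (i \<bullet> i) - (1 / ?N ^ 4) * ((?y \<bullet> i) * (?y \<bullet> i)))"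
    by (simp add: sqA_def sum_Basis_prod
        frechet_derivative_at[OF has_derivative_shr_normal[OF assms], symmetric])
  also have "\<dots> = (1 / ?N ^ 2) * real CARD('a) - (1 / ?N ^ 4) * ?N ^ 2"
    by (simp only: sum_subtractf flip: sum_distrib_left)
       (simp flip: euclidean_inner power2_norm_eq_inner)
  also have "\<dots> = (real CARD('a) - 1) / ?N ^ 2"
    using assms by (simp add: field_simps eval_nat_numeral)
  finally show ?thesis .
qed

lemma twice_diff_on_hext_inner_product:
  fixes a :: "real^'a::finite" and b :: "real^'b::finite"
  assumes "\<And>q. q \<in> N \<Longrightarrow> fst q \<noteq> 0"
  shows "twice_diff_on N (hext (\<lambda>(y, z). (a \<bullet> y) * (b \<bullet> z)))"
proof -
  let ?c = "shr_radius TYPE('a) *\<^sub>R a"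
  have "hext (\<lambda>(y, z). (a \<bullet> y) * (b \<bullet> z)) = (\<lambda>q. (?c \<bullet> fst q) / norm (fst q) * (b \<bullet> snd q))"
    by (auto simp: hext_def fun_eq_iff)
  moreover have "twice_diff_on N (\<lambda>q. (?c \<bullet> fst q) / norm (fst q) * (b \<bullet> snd q))"
  proof (rule twice_diff_on_mult_linear)
    show "fst ` N \<subseteq> - {0}"
      using assms by auto
    show "((\<lambda>x. (?c \<bullet> x) / norm x) has_derivative
            (\<lambda>h. (?c \<bullet> h) / norm y - (?c \<bullet> y) * (y \<bullet> h) / norm y ^ 3)) (at y)"
      if "y \<in> - {0}" for y
      using that by (intro has_derivative_inner_div_norm) simp
    show "(\<lambda>y. (?c \<bullet> w) / norm y - (?c \<bullet> y) * (y \<bullet> w) / norm y ^ 3) differentiable (at y)"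
      if "y \<in> - {0}" for y w
      using that has_derivative_inner_div_norm_derivative by (blast intro: differentiableI)
  qed (auto intro: bounded_linear_inner_right)
  ultimately show ?thesis by simp
qed

lemma eucl_laplacian_hext_inner_product:
  fixes a y :: "real^'a::finite" and b z :: "real^'b::finite"
  assumes "y \<noteq> 0"
  defines "u \<equiv> \<lambda>(y, z). (a \<bullet> y) * (b \<bullet> z)"
  shows "eucl_laplacian (hext u) (y, z) = (1 - real CARD('a)) * hext u (y, z) / norm y ^ 2"
proof -
  let ?r = "shr_radius TYPE('a)"
  have sphere_part: "(\<lambda>y. hext u (y, z)) = (\<lambda>y. ((?r * (b \<bullet> z)) *\<^sub>R a) \<bullet> y / norm y)"
    by (auto simp: hext_def u_def fun_eq_iff)
  have line_part: "(\<lambda>z. hext u (y, z)) = (\<lambda>z. (a \<bullet> ((?r / norm y) *\<^sub>R y)) * (b \<bullet> z))"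
    by (auto simp: hext_def u_def fun_eq_iff)
  have "linear (\<lambda>z. c * (b \<bullet> z))" for c :: real
    unfolding linear_iff by (simp add: inner_add_right algebra_simps)
  then have "eucl_laplacian (\<lambda>z. hext u (y, z)) z = 0"
    unfolding line_part by (rule eucl_laplacian_linear)
  moreover have "eucl_laplacian (\<lambda>y. hext u (y, z)) y
      = (1 - real CARD('a)) * (((?r * (b \<bullet> z)) *\<^sub>R a) \<bullet> y) / norm y ^ 3"
    unfolding sphere_part using eucl_laplacian_inner_div_norm[OF assms(1)]
    by (simp only: DIM_cart DIM_real mult_1_right)
  ultimately show ?thesis
    using assms(1) by (simp add: eucl_laplacian_Pair hext_def u_def field_simps eval_nat_numeral)
qed

lemma stab_op_inner_product_eq_0:
  fixes a y :: "real^'a::finite" and b z :: "real^'b::finite"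
  assumes "(y, z) \<in> Sigma" and "y \<noteq> 0"
  shows "stab_op (\<lambda>(y, z). (a \<bullet> y) * (b \<bullet> z)) (y, z) = 0"
proof -
  define u where "u = (\<lambda>(y::real^'a, z::real^'b). (a \<bullet> y) * (b \<bullet> z))"
  have "\<And>y z s. u (y, s *\<^sub>R z) = s * u (y, z)"
    by (simp add: u_def)
  then have euler: "dd (hext u) (y, z) (y, z) = hext u (y, z)"
    by (intro dd_self_eq_if_homogeneous hext_scaleR)
  have "stab_op u (y, z) = (1 - real CARD('a)) * u (y, z) / norm y ^ 2 - 1/2 * u (y, z)
      + ((real CARD('a) - 1) / norm y ^ 2 + 1/2) * u (y, z)"
    using assms unfolding stab_op_def u_def
    by (simp add: eucl_laplacian_hext_inner_product euler[unfolded u_def] hext_eq_on_Sigma sqA_eq)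
  also have "\<dots> = 0"
    using assms(2) by (simp add: field_simps)
  finally show ?thesis
    by (simp add: u_def)
qed

theorem proposition4p3:
  fixes a :: "real^'a::finite" and b :: "real^'b::finite"
  assumes "CARD('a) \<ge> 2"
    and "a \<noteq> 0" and "b \<noteq> 0"
  shows "stable_region
           {(y, z). (y, z) \<in> (Sigma :: ((real^'a) \<times> (real^'b)) set) \<and> a \<bullet> y > 0 \<and> b \<bullet> z > 0}"
proof -
  \<comment> \<open>The hypotheses on CARD('a), a and b only make the region nonempty.\<close>
  let ?\<Omega> = "{(y, z). (y, z) \<in> (Sigma :: ((real^'a) \<times> (real^'b)) set) \<and> a \<bullet> y > 0 \<and> b \<bullet> z > 0}"
  let ?u = "\<lambda>(y, z). (a \<bullet> y) * (b \<bullet> z)"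
  have "twice_diff_on (normal_nbhd ?\<Omega>) (hext ?u)"
    by (rule twice_diff_on_hext_inner_product) (auto simp: normal_nbhd_def)
  moreover have "stab_op ?u p = 0 \<and> ?u p > 0" if "p \<in> ?\<Omega>" for p
  proof -
    obtain y z where "p = (y, z)" and "(y, z) \<in> Sigma" and "a \<bullet> y > 0" and "b \<bullet> z > 0"
      using \<open>p \<in> ?\<Omega>\<close> by blast
    moreover have "y \<noteq> 0"
      using \<open>a \<bullet> y > 0\<close> by auto
    ultimately show ?thesis
      by (simp add: stab_op_inner_product_eq_0)
  qed
  ultimately show ?thesis
    unfolding stable_region_def by blast
qed

end
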